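(* Let $\Bbbk$ be a field of characteristic $\neq2$ and $L$ a Lie tri-algebra over $\Bbbk$. Let $L_0=\mathrm{span}\{[a\vdash b]-[a\dashv b],\ [a\vdash b]-[a\perp b]\mid a,b\in L\}$, and let $X=X_0\cup X_1$ (disjoint union) be a linearly ordered basis of $L$ such that $X_0$ is a basis of $L_0$. For $x,y\in X$ let $\mu_\dashv(x,y)$ and $\mu_\perp(x,y)$ denote $[x\dashv y]$ and $[x\perp y]$ written as linear combinations of $X$, and for $\mu=\sum_i\alpha_i z_i$ ($z_i\in X$) put $\dot\mu=\sum_i\alpha_i\dot z_i$. In the free associative algebra $\mathrm{As}\langle X\cup\dot X\rangle$, where $\dot X=\{\dot x\mid x\in X\}$ is a disjoint copy of $X$, order $X\cup\dot X$ by extending the order of $X$ via: $x>y\Rightarrow\dot x>\dot y$, and $\dot x>y$ for all $x,y\in X$; order words by deg-lex order. Then the set of polynomials $$x\ (x\in X_0);\qquad xy-yx-\mu_\dashv(x,y)\ (x,y\in X_1,\ x>y);$$ $$\dot xy-y\dot x-\dot\mu_\dashv(x,y)\ (x\in X,\ y\in X_1);\qquad \dot x\dot y-\dot y\dot x-\dot\mu_\perp(x,y)\ (x,y\in X,\ x>y)$$ is a Gröbner–Shirshov basis in $\mathrm{As}\langle X\cup\dot X\rangle$.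
   Context: A Lie tri-algebra is a vector space with bilinear operations $[\cdot\vdash\cdot]$, $[\cdot\dashv\cdot]$, $[\cdot\perp\cdot]$ such that $[a\dashv b]=-[b\vdash a]$, $[a\perp b]=-[b\perp a]$, $[[x_1\vdash x_2]\vdash x_3]-[x_1\vdash[x_2\vdash x_3]]+[x_2\vdash[x_1\vdash x_3]]=0$, $[[x_1\perp x_2]\vdash x_3]=[[x_1\vdash x_2]\vdash x_3]$, $[[x_1\vdash x_2]\perp x_3]-[x_1\vdash[x_2\perp x_3]]-[[x_1\vdash x_3]\perp x_2]=0$, and $[[x_1\perp x_2]\perp x_3]+[[x_2\perp x_3]\perp x_1]+[[x_3\perp x_1]\perp x_2]=0$. Gröbner–Shirshov basis (associative case): deg-lex order compares words first by length, then lexicographically. For a nonzero polynomial $f$, $\bar f$ is its largest word; $f$ is monic if $\bar f$ has coefficient 1 (all listed polynomials are monic with leading words $x$, $xy$, $\dot xy$, $\dot x\dot y$ respectively). For monic $f,g$: if $\bar f=u\bar g u'$ the composition of inclusion is $(f,g)_w=f-ugu'$ with $w=\bar f$; if $\bar f=uu'$, $\bar g=u'u''$ with $u'$ nonempty and $u,u''$ nonempty, the composition of intersection is $(f,g)_w=fu''-ug$ with $w=uu'u''$. A set $S$ of monic polynomials is a Gröbner–Shirshov basis if every composition $(f,g)_w$ of elements $f,g\in S$ can be written as $\sum_i\alpha_i u_is_iu_i'$ with $s_i\in S$, $\alpha_i\in\Bbbk$, words $u_i,u_i'$, and $u_i\bar s_iu_i'<w$. *)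

theory Defs
  imports Complex_Main "HOL-Library.Poly_Mapping"
begin

definition bilinear_map :: "('k::field \<Rightarrow> 'v::ab_group_add \<Rightarrow> 'v) \<Rightarrow> ('v \<Rightarrow> 'v \<Rightarrow> 'v) \<Rightarrow> bool" where
  "bilinear_map sc f \<longleftrightarrow>
     (\<forall>x. Vector_Spaces.linear sc sc (f x)) \<and> (\<forall>y. Vector_Spaces.linear sc sc (\<lambda>x. f x y))"

text \<open>vd a b = [a |- b], dv a b = [a -| b], pp a b = [a _|_ b]\<close>
definition lie_tri_algebra ::
  "('k::field \<Rightarrow> 'v::ab_group_add \<Rightarrow> 'v) \<Rightarrow> ('v \<Rightarrow> 'v \<Rightarrow> 'v) \<Rightarrow> ('v \<Rightarrow> 'v \<Rightarrow> 'v) \<Rightarrow> ('v \<Rightarrow> 'v \<Rightarrow> 'v) \<Rightarrow> bool" where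
  "lie_tri_algebra sc vd dv pp \<longleftrightarrow>
     vector_space sc \<and> bilinear_map sc vd \<and> bilinear_map sc dv \<and> bilinear_map sc pp \<and>
     (\<forall>a b. dv a b = - vd b a) \<and> (\<forall>a b. pp a b = - pp b a) \<and>
     (\<forall>x1 x2 x3. vd (vd x1 x2) x3 - vd x1 (vd x2 x3) + vd x2 (vd x1 x3) = 0) \<and>
     (\<forall>x1 x2 x3. vd (pp x1 x2) x3 = vd (vd x1 x2) x3) \<and>
     (\<forall>x1 x2 x3. pp (vd x1 x2) x3 - vd x1 (pp x2 x3) - pp (vd x1 x3) x2 = 0) \<and>
     (\<forall>x1 x2 x3. pp (pp x1 x2) x3 + pp (pp x2 x3) x1 + pp (pp x3 x1) x2 = 0)"

datatype 'x letter = Pl 'x | Dt 'x   \<comment> \<open>Pl x = x, Dt x = dotted x\<close>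

fun letter_less :: "'x::linorder letter \<Rightarrow> 'x letter \<Rightarrow> bool" where
  "letter_less (Pl x) (Pl y) = (x < y)"
| "letter_less (Dt x) (Dt y) = (x < y)"
| "letter_less (Pl x) (Dt y) = True"
| "letter_less (Dt x) (Pl y) = False"

text \<open>deg-lex order on words: (u, v) \<in> word_less means u < v\<close>
definition word_less :: "('x::linorder letter list \<times> 'x letter list) set" where
  "word_less = lenlex {(a, b). letter_less a b}"

type_synonym ('x, 'k) apoly = "'x letter list \<Rightarrow>\<^sub>0 'k"

definition wmul :: "'x letter list \<Rightarrow> ('x, 'k::comm_ring_1) apoly \<Rightarrow> 'x letter list \<Rightarrow> ('x, 'k) apoly" where
  "wmul u f v = (\<Sum>w\<in>Poly_Mapping.keys f. Poly_Mapping.single (u @ w @ v) (Poly_Mapping.lookup f w))"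

definition psmult :: "'k::comm_ring_1 \<Rightarrow> ('x, 'k) apoly \<Rightarrow> ('x, 'k) apoly" where
  "psmult a f = (\<Sum>w\<in>Poly_Mapping.keys f. Poly_Mapping.single w (a * Poly_Mapping.lookup f w))"

definition lead :: "('x::linorder, 'k::comm_ring_1) apoly \<Rightarrow> 'x letter list" where
  "lead f = (THE w. w \<in> Poly_Mapping.keys f \<and> (\<forall>v\<in>Poly_Mapping.keys f. v \<noteq> w \<longrightarrow> (v, w) \<in> word_less))"

definition monic :: "('x::linorder, 'k::comm_ring_1) apoly \<Rightarrow> bool" where
  "monic f \<longleftrightarrow> f \<noteq> 0 \<and> Poly_Mapping.lookup f (lead f) = 1"

text \<open>compositions (f,g)_w of inclusion and of intersection, as pairs (polynomial, w)\<close>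
definition compositions ::
  "('x::linorder, 'k::comm_ring_1) apoly \<Rightarrow> ('x, 'k) apoly \<Rightarrow> (('x, 'k) apoly \<times> 'x letter list) set" where
  "compositions f g =
     {(f - wmul u g u', lead f) | u u'. lead f = u @ lead g @ u'} \<union>
     {(wmul [] f u'' - wmul u g [], u @ u' @ u'') | u u' u''.
        lead f = u @ u' \<and> lead g = u' @ u'' \<and> u \<noteq> [] \<and> u' \<noteq> [] \<and> u'' \<noteq> []}"

definition GS_basis :: "('x::linorder, 'k::comm_ring_1) apoly set \<Rightarrow> bool" where
  "GS_basis S \<longleftrightarrow> (\<forall>s\<in>S. monic s) \<and>
     (\<forall>f\<in>S. \<forall>g\<in>S. \<forall>(h, w)\<in>compositions f g.
        \<exists>ts :: ('k \<times> 'x letter list \<times> ('x, 'k) apoly \<times> 'x letter list) list.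
          (\<forall>(a, u, s, v)\<in>set ts. s \<in> S \<and> (u @ lead s @ v, w) \<in> word_less) \<and>
          h = (\<Sum>(a, u, s, v)\<leftarrow>ts. psmult a (wmul u s v)))"

definition coord :: "('k::field \<Rightarrow> 'v::ab_group_add \<Rightarrow> 'v) \<Rightarrow> ('x \<Rightarrow> 'v) \<Rightarrow> 'v \<Rightarrow> 'x \<Rightarrow> 'k" where
  "coord sc e v z = module.representation sc (range e) v (e z)"

definition lin_poly :: "('x \<Rightarrow> 'x letter) \<Rightarrow> ('x \<Rightarrow> 'k::comm_ring_1) \<Rightarrow> ('x, 'k) apoly" where
  "lin_poly L c = (\<Sum>z\<in>{z. c z \<noteq> 0}. Poly_Mapping.single [L z] (c z))"

definition tri_GS_set ::
  "('k::field \<Rightarrow> 'v::ab_group_add \<Rightarrow> 'v) \<Rightarrow> ('v \<Rightarrow> 'v \<Rightarrow> 'v) \<Rightarrow> ('v \<Rightarrow> 'v \<Rightarrow> 'v)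
     \<Rightarrow> ('x::linorder \<Rightarrow> 'v) \<Rightarrow> 'x set \<Rightarrow> ('x, 'k) apoly set" where
  "tri_GS_set sc dv pp e X0 =
     {Poly_Mapping.single [Pl x] 1 | x. x \<in> X0} \<union>
     {Poly_Mapping.single [Pl x, Pl y] 1 - Poly_Mapping.single [Pl y, Pl x] 1
        - lin_poly Pl (coord sc e (dv (e x) (e y))) | x y. x \<notin> X0 \<and> y \<notin> X0 \<and> x > y} \<union>
     {Poly_Mapping.single [Dt x, Pl y] 1 - Poly_Mapping.single [Pl y, Dt x] 1
        - lin_poly Dt (coord sc e (dv (e x) (e y))) | x y. y \<notin> X0} \<union>
     {Poly_Mapping.single [Dt x, Dt y] 1 - Poly_Mapping.single [Dt y, Dt x] 1
        - lin_poly Dt (coord sc e (pp (e x) (e y))) | x y. x > y}"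

end

theory Submission
  imports Defs
begin

text \<open>None of the leading words \<open>x\<close>, \<open>xy\<close>, \<open>\<dot>xy\<close>, \<open>\<dot>x\<dot>y\<close> contains another,
  and their only overlaps are words of length three.  Rewriting both sides of such a
  composition with the commutation relations leaves a linear polynomial: the expansion of
  one of the defining identities of the Lie tri-algebra (the Leibniz identity for \<open>\<turnstile>\<close>, the
  mixed identity for \<open>\<turnstile>\<close> and \<open>\<perp>\<close>, the Jacobi identity for \<open>\<perp>\<close>), which vanishes, except in
  the undotted case where the Jacobi sum of \<open>\<dashv>\<close> only lies in \<open>L\<^sub>0\<close>; but letters from
  \<open>X\<^sub>0\<close> are themselves relations.  Since \<open>L\<^sub>0\<close> is a left annihilator for \<open>\<turnstile>\<close>, the
  commutation relations may be used for every pair of letters, which is what the rewriting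
  needs.\<close>

lemma lookup_wmul:
  "Poly_Mapping.lookup (wmul u f v) x =
     (\<Sum>w\<in>Poly_Mapping.keys f. if u @ w @ v = x then Poly_Mapping.lookup f w else 0)"
  unfolding wmul_def lookup_sum lookup_single when_def by (rule refl)

lemma lookup_wmul_append [simp]:
  "Poly_Mapping.lookup (wmul u f v) (u @ w @ v) = Poly_Mapping.lookup f w"
proof -
  have "Poly_Mapping.lookup (wmul u f v) (u @ w @ v) =
      (\<Sum>w'\<in>Poly_Mapping.keys f. if w' = w then Poly_Mapping.lookup f w' else 0)"
    unfolding lookup_wmul by (intro sum.cong) auto
  also have "\<dots> = Poly_Mapping.lookup f w"
    by (simp add: sum.delta' in_keys_iff)
  finally show ?thesis .
qed

lemma lookup_wmul_eq_0: "(\<And>w. x \<noteq> u @ w @ v) \<Longrightarrow> Poly_Mapping.lookup (wmul u f v) x = 0"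
  unfolding lookup_wmul by (rule sum.neutral) auto

lemma wmul_eqI:
  assumes "\<And>w. Poly_Mapping.lookup p (u @ w @ v) = Poly_Mapping.lookup (wmul u f v) (u @ w @ v)"
    and "\<And>x. (\<And>w. x \<noteq> u @ w @ v) \<Longrightarrow> Poly_Mapping.lookup p x = 0"
  shows "wmul u f v = p"
proof (rule poly_mapping_eqI)
  fix x
  show "Poly_Mapping.lookup (wmul u f v) x = Poly_Mapping.lookup p x"
  proof (cases "\<exists>w. x = u @ w @ v")
    case True
    then show ?thesis using assms(1) by auto
  next
    case False
    then have "\<And>w. x \<noteq> u @ w @ v" by blast
    then show ?thesis by (simp add: assms(2) lookup_wmul_eq_0)
  qed
qed

lemma wmul_add: "wmul u (f + g) v = wmul u f v + wmul u g v"
  by (rule wmul_eqI) (simp_all add: lookup_add lookup_wmul_eq_0)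

lemma wmul_diff: "wmul u (f - g) v = wmul u f v - wmul u g v"
  by (rule wmul_eqI) (simp_all add: lookup_minus lookup_wmul_eq_0)

lemma wmul_single: "wmul u (Poly_Mapping.single w c) v = Poly_Mapping.single (u @ w @ v) c"
  by (rule wmul_eqI) (auto simp: lookup_single when_def)

lemma wmul_Nil_Nil [simp]: "wmul [] f [] = f"
  by (rule poly_mapping_eqI) (metis append.left_neutral append_Nil2 lookup_wmul_append)

lemma lookup_psmult [simp]: "Poly_Mapping.lookup (psmult c f) x = c * Poly_Mapping.lookup f x"
proof -
  have "Poly_Mapping.lookup (psmult c f) x =
      (\<Sum>w\<in>Poly_Mapping.keys f. if w = x then c * Poly_Mapping.lookup f w else 0)"
    unfolding psmult_def lookup_sum lookup_single when_def by (intro sum.cong) auto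
  also have "\<dots> = c * Poly_Mapping.lookup f x"
    by (simp add: sum.delta in_keys_iff)
  finally show ?thesis .
qed

lemma psmult_add: "psmult c (f + g) = psmult c f + psmult c g"
  by (rule poly_mapping_eqI) (simp add: lookup_add algebra_simps)

lemma psmult_diff: "psmult c (f - g) = psmult c f - psmult c g"
  by (rule poly_mapping_eqI) (simp add: lookup_minus algebra_simps)

lemma psmult_psmult: "psmult c (psmult d f) = psmult (c * d) f"
  by (rule poly_mapping_eqI) (simp add: algebra_simps)

lemma psmult_minus_one: "psmult (-1) f = - f"
  by (rule poly_mapping_eqI) simp

lemma psmult_0_right [simp]: "psmult c 0 = 0"
  and psmult_0_left [simp]: "psmult 0 f = 0"
  and psmult_1 [simp]: "psmult 1 f = f"
  by (rule poly_mapping_eqI; simp)+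

lemma psmult_sum_list: "psmult c (sum_list (map F ts)) = (\<Sum>t\<leftarrow>ts. psmult c (F t))"
  by (induction ts) (simp_all add: psmult_add)

lemma wmul_psmult: "wmul u (psmult c f) v = psmult c (wmul u f v)"
  by (rule wmul_eqI) (simp_all add: lookup_wmul_eq_0)

lemma letter_less_irrefl: "\<not> letter_less a a"
  by (cases a) auto

lemma letter_less_trans: "letter_less a b \<Longrightarrow> letter_less b c \<Longrightarrow> letter_less a c"
  by (cases a; cases b; cases c) auto

lemma word_less_irrefl: "(w, w) \<notin> word_less"
  unfolding word_less_def by (rule lenlex_irreflexive) (simp add: letter_less_irrefl)

lemma word_less_trans: "(u, v) \<in> word_less \<Longrightarrow> (v, w) \<in> word_less \<Longrightarrow> (u, w) \<in> word_less"
proof -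
  have "trans {(a, b). letter_less a b}"
    by (auto intro: transI letter_less_trans)
  then show "(u, v) \<in> word_less \<Longrightarrow> (v, w) \<in> word_less \<Longrightarrow> (u, w) \<in> word_less"
    unfolding word_less_def using lenlex_trans by blast
qed

lemma word_less_asym: "(u, v) \<in> word_less \<Longrightarrow> (v, u) \<notin> word_less"
  using word_less_irrefl word_less_trans by blast

lemma word_less_length: "length v < length w \<Longrightarrow> (v, w) \<in> word_less"
  by (simp add: word_less_def lenlex_conv)

lemma word_less_same_length_iff:
  "length v = length w \<Longrightarrow> (v, w) \<in> word_less \<longleftrightarrow> (v, w) \<in> lex {(a, b). letter_less a b}"
  by (simp add: word_less_def lenlex_conv)

lemma lead_eqI:
  assumes "Poly_Mapping.lookup f w \<noteq> 0"
    and "\<And>v. Poly_Mapping.lookup f v \<noteq> 0 \<Longrightarrow> v \<noteq> w \<Longrightarrow> (v, w) \<in> word_less"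
  shows "lead f = w"
  unfolding lead_def
proof (rule the_equality)
  show "w \<in> Poly_Mapping.keys f \<and> (\<forall>v\<in>Poly_Mapping.keys f. v \<noteq> w \<longrightarrow> (v, w) \<in> word_less)"
    using assms by (auto simp: in_keys_iff)
next
  fix w'
  assume h: "w' \<in> Poly_Mapping.keys f \<and> (\<forall>v\<in>Poly_Mapping.keys f. v \<noteq> w' \<longrightarrow> (v, w') \<in> word_less)"
  show "w' = w"
  proof (rule ccontr)
    assume "w' \<noteq> w"
    with assms h have "(w', w) \<in> word_less" "(w, w') \<in> word_less"
      by (auto simp: in_keys_iff)
    then show False using word_less_asym by blast
  qed
qed

lemma lead_single_letter: "lead (Poly_Mapping.single [a] (1::'k::comm_ring_1)) = [a]"
  by (rule lead_eqI) (auto simp: lookup_single when_def)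

lemma monic_single_letter: "monic (Poly_Mapping.single [a] (1::'k::comm_ring_1))"
  unfolding monic_def lead_single_letter by (metis lookup_single_eq lookup_zero zero_neq_one)

definition trivial_mod ::
  "('x::linorder, 'k::comm_ring_1) apoly set \<Rightarrow> 'x letter list \<Rightarrow> ('x, 'k) apoly \<Rightarrow> bool" where
  "trivial_mod S w h \<longleftrightarrow>
     (\<exists>ts :: ('k \<times> 'x letter list \<times> ('x, 'k) apoly \<times> 'x letter list) list.
        (\<forall>(a, u, s, v)\<in>set ts. s \<in> S \<and> (u @ lead s @ v, w) \<in> word_less) \<and>
        h = (\<Sum>(a, u, s, v)\<leftarrow>ts. psmult a (wmul u s v)))"

lemma trivial_mod_0: "trivial_mod S w 0"
  unfolding trivial_mod_def by (rule exI[of _ "[]"]) simp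

lemma trivial_mod_add: "trivial_mod S w f \<Longrightarrow> trivial_mod S w g \<Longrightarrow> trivial_mod S w (f + g)"
  unfolding trivial_mod_def by (metis (no_types, lifting) Un_iff map_append set_append sum_list_append)

lemma trivial_mod_psmult:
  assumes "trivial_mod S w f"
  shows "trivial_mod S w (psmult c f)"
proof -
  from assms obtain ts where ts: "\<forall>(a, u, s, v)\<in>set ts. s \<in> S \<and> (u @ lead s @ v, w) \<in> word_less"
    and f: "f = (\<Sum>(a, u, s, v)\<leftarrow>ts. psmult a (wmul u s v))"
    unfolding trivial_mod_def by blast
  show ?thesis
    unfolding trivial_mod_def
    by (intro exI[of _ "map (\<lambda>(a, u, s, v). (c * a, u, s, v)) ts"])
      (use ts in \<open>auto simp: f psmult_sum_list o_def split_def psmult_psmult\<close>)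
qed

lemma trivial_mod_uminus: "trivial_mod S w f \<Longrightarrow> trivial_mod S w (- f)"
  using trivial_mod_psmult[of S w f "-1"] by (simp add: psmult_minus_one)

lemma trivial_mod_diff: "trivial_mod S w f \<Longrightarrow> trivial_mod S w g \<Longrightarrow> trivial_mod S w (f - g)"
  using trivial_mod_add[of S w f "- g"] trivial_mod_uminus by fastforce

lemma trivial_mod_wmul:
  "s \<in> S \<Longrightarrow> (u @ lead s @ v, w) \<in> word_less \<Longrightarrow> trivial_mod S w (wmul u s v)"
  unfolding trivial_mod_def by (rule exI[of _ "[(1, u, s, v)]"]) simp

lemma GS_basisI:
  assumes "\<And>s. s \<in> S \<Longrightarrow> monic s"
    and "\<And>f g h w. f \<in> S \<Longrightarrow> g \<in> S \<Longrightarrow> (h, w) \<in> compositions f g \<Longrightarrow> trivial_mod S w h"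
  shows "GS_basis S"
  using assms unfolding GS_basis_def trivial_mod_def by fast

definition comm_rel :: "'x letter \<Rightarrow> 'x letter \<Rightarrow> ('x, 'k::comm_ring_1) apoly \<Rightarrow> ('x, 'k) apoly" where
  "comm_rel a b p = Poly_Mapping.single [a, b] 1 - Poly_Mapping.single [b, a] 1 - p"

lemma
  assumes "letter_less b a" and "\<And>w. w \<in> Poly_Mapping.keys p \<Longrightarrow> length w < 2"
  shows lead_comm_rel: "lead (comm_rel a b p) = [a, b]"
    and monic_comm_rel: "monic (comm_rel a b p)"
proof -
  have "a \<noteq> b" using assms(1) letter_less_irrefl by metis
  moreover have "Poly_Mapping.lookup p [a, b] = 0" using assms(2) by (force simp: in_keys_iff)
  ultimately have lead_coeff: "Poly_Mapping.lookup (comm_rel a b p) [a, b] = 1"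
    by (simp add: comm_rel_def lookup_minus lookup_single)
  have "(v, [a, b]) \<in> word_less"
    if "Poly_Mapping.lookup (comm_rel a b p) v \<noteq> 0" "v \<noteq> [a, b]" for v
  proof (cases "v = [b, a]")
    case True
    then show ?thesis using assms(1) by (simp add: word_less_same_length_iff)
  next
    case False
    with that have "v \<in> Poly_Mapping.keys p"
      by (auto simp: comm_rel_def lookup_minus lookup_single in_keys_iff)
    then have "length v < length [a, b]" using assms(2) by (simp add: numeral_2_eq_2)
    then show ?thesis by (rule word_less_length)
  qed
  with lead_coeff show lead: "lead (comm_rel a b p) = [a, b]" by (intro lead_eqI) simp_all
  with lead_coeff show "monic (comm_rel a b p)" unfolding monic_def by auto
qed

lemma bilinear_map_simps:
  assumes "bilinear_map sc f" and "vector_space sc"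
  shows "f (a + b) c = f a c + f b c" "f c (a + b) = f c a + f c b"
    "f (sc k a) c = sc k (f a c)" "f c (sc k a) = sc k (f c a)"
    "f (- a) c = - f a c" "f c (- a) = - f c a"
    "f (a - b) c = f a c - f b c" "f c (a - b) = f c a - f c b"
    "f 0 c = 0" "f c 0 = 0"
proof -
  interpret left: module_hom sc sc "\<lambda>x. f x c"
    using assms by (simp add: bilinear_map_def linear_iff_module_hom)
  interpret right: module_hom sc sc "f c"
    using assms by (simp add: bilinear_map_def linear_iff_module_hom)
  show "f (a + b) c = f a c + f b c" "f c (a + b) = f c a + f c b"
    "f (sc k a) c = sc k (f a c)" "f c (sc k a) = sc k (f c a)"
    "f (- a) c = - f a c" "f c (- a) = - f c a"
    "f (a - b) c = f a c - f b c" "f c (a - b) = f c a - f c b"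
    "f 0 c = 0" "f c 0 = 0"
    by (simp_all add: left.add right.add left.scale right.scale left.neg right.neg
        left.diff right.diff)
qed

locale tri_algebra =
  fixes sc :: "'k::field \<Rightarrow> 'v::ab_group_add \<Rightarrow> 'v"
    and vd dv pp :: "'v \<Rightarrow> 'v \<Rightarrow> 'v"
  assumes lie_tri_algebra: "lie_tri_algebra sc vd dv pp"
    and two_nonzero: "(2::'k) \<noteq> 0"
begin

sublocale vs: vector_space sc
  using lie_tri_algebra unfolding lie_tri_algebra_def by simp

lemma dv_vd: "dv a b = - vd b a"
  and pp_antisym: "pp a b = - pp b a"
  and vd_leibniz: "vd (vd x1 x2) x3 - vd x1 (vd x2 x3) + vd x2 (vd x1 x3) = 0"
  and vd_pp_left: "vd (pp x1 x2) x3 = vd (vd x1 x2) x3"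
  and pp_vd_mixed: "pp (vd x1 x2) x3 - vd x1 (pp x2 x3) - pp (vd x1 x3) x2 = 0"
  and pp_jacobi_cyclic: "pp (pp x1 x2) x3 + pp (pp x2 x3) x1 + pp (pp x3 x1) x2 = 0"
  using lie_tri_algebra unfolding lie_tri_algebra_def by (elim conjE; blast)+

lemma bilinear_vd: "bilinear_map sc vd"
  and bilinear_dv: "bilinear_map sc dv"
  and bilinear_pp: "bilinear_map sc pp"
  using lie_tri_algebra unfolding lie_tri_algebra_def by (elim conjE; blast)+

lemmas vd_simps = bilinear_map_simps[OF bilinear_vd vs.vector_space_axioms]
lemmas pp_simps = bilinear_map_simps[OF bilinear_pp vs.vector_space_axioms]

lemma scale_half_double: "sc (1/2) (x + x) = x"
proof -
  have "sc (1/2) (x + x) = sc (1/2) x + sc (1/2) x" by (rule vs.scale_right_distrib)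
  also have "\<dots> = sc (1/2 + 1/2) x" by (rule vs.scale_left_distrib[symmetric])
  also have "(1/2 + 1/2 :: 'k) = 1" using two_nonzero by (simp add: field_simps)
  finally show ?thesis by simp
qed

definition L0 :: "'v set" where
  "L0 = vs.span ({vd a b - dv a b | a b. True} \<union> {vd a b - pp a b | a b. True})"

lemma L0_zero [simp]: "0 \<in> L0"
  unfolding L0_def by (rule vs.span_zero)

lemma L0_uminus_iff [simp]: "- u \<in> L0 \<longleftrightarrow> u \<in> L0"
proof
  assume "- u \<in> L0"
  then have "- (- u) \<in> L0" unfolding L0_def by (rule vs.span_neg)
  then show "u \<in> L0" by simp
next
  assume "u \<in> L0"
  then show "- u \<in> L0" unfolding L0_def by (rule vs.span_neg)
qed

lemma vd_skew_left: "vd (vd a b) c + vd (vd b a) c = 0"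
proof -
  have "vd (vd a b) c + vd (vd b a) c = vd (pp a b) c + vd (pp b a) c" by (simp add: vd_pp_left)
  also have "\<dots> = 0" using pp_antisym[of b a] by (simp add: vd_simps)
  finally show ?thesis .
qed

lemma vd_sym_in_L0: "vd a b + vd b a \<in> L0"
  unfolding L0_def by (rule vs.span_base) (auto simp: dv_vd)

lemma vd_L0_left [simp]:
  assumes "u \<in> L0"
  shows "vd u c = 0"
  using assms unfolding L0_def
proof (induction rule: vs.span_induct_alt)
  case base
  then show ?case by (simp add: vd_simps)
next
  case (step k x y)
  have "vd x c = 0"
    using step(1) vd_skew_left[of _ _ c] by (auto simp: vd_simps dv_vd vd_pp_left)
  then show ?case using step(2) by (simp add: vd_simps)
qed

lemma vd_L0_right: "u \<in> L0 \<Longrightarrow> vd c u \<in> L0"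
  using vd_sym_in_L0[of c u] by simp

lemma vd_self_in_L0: "vd a a \<in> L0"
proof -
  have "sc (1/2) (vd a a + vd a a) \<in> L0"
    using vs.span_scale[OF vd_sym_in_L0[of a a, unfolded L0_def]] unfolding L0_def .
  then show ?thesis by (simp only: scale_half_double)
qed

lemma pp_self [simp]: "pp a a = 0"
proof -
  have "pp a a + pp a a = 0" using pp_antisym[of a a] by (simp add: eq_neg_iff_add_eq_0)
  then show ?thesis using scale_half_double[of "pp a a"] by simp
qed

lemma dv_jacobi_in_L0: "dv (dv a c) b + dv a (dv b c) + dv c (dv a b) \<in> L0"
proof -
  have "vd (vd c b) a = - vd (vd b c) a"
    using vd_skew_left[of c b a] by (simp add: eq_neg_iff_add_eq_0)
  moreover have "vd (vd b c) a = vd b (vd c a) - vd c (vd b a)"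
    using vd_leibniz[of b c a] by (simp add: algebra_simps)
  ultimately have "dv (dv a c) b + dv a (dv b c) + dv c (dv a b) = vd c (vd b a) + vd (vd b a) c"
    by (simp add: dv_vd vd_simps)
  then show ?thesis using vd_sym_in_L0 by simp
qed

lemma dv_leibniz: "dv a (dv b c) + dv (dv a c) b - dv (dv a b) c = 0"
  using vd_leibniz[of c b a] by (simp add: dv_vd vd_simps algebra_simps)

lemma pp_dv_mixed: "pp a (dv b c) + pp (dv a c) b - dv (pp a b) c = 0"
proof -
  have "pp a (dv b c) = pp (vd c b) a"
    using pp_antisym[of a "vd c b"] by (simp add: dv_vd pp_simps)
  then show ?thesis
    using pp_vd_mixed[of c a b] by (simp add: dv_vd pp_simps algebra_simps)
qed

lemma pp_jacobi_rearranged: "pp (pp a c) b + pp a (pp b c) + pp c (pp a b) = 0"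
proof -
  have "pp (pp a c) b + pp a (pp b c) + pp c (pp a b) =
      - (pp (pp a b) c + pp (pp b c) a + pp (pp c a) b)"
    using pp_antisym[of a c] pp_antisym[of a "pp b c"] pp_antisym[of c "pp a b"]
    by (simp add: pp_simps algebra_simps)
  then show ?thesis using pp_jacobi_cyclic[of a b c] by simp
qed

end

lemma lookup_lin_poly_eq_0: "(\<And>z. w \<noteq> [L z]) \<Longrightarrow> Poly_Mapping.lookup (lin_poly L c) w = 0"
  unfolding lin_poly_def lookup_sum lookup_single when_def by (rule sum.neutral) auto

lemma keys_lin_poly: "w \<in> Poly_Mapping.keys (lin_poly L c) \<Longrightarrow> \<exists>z. w = [L z]"
  using lookup_lin_poly_eq_0 by (fastforce simp: in_keys_iff)

lemma lookup_lin_poly_letter: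
  assumes "inj L" and "finite {z. c z \<noteq> 0}"
  shows "Poly_Mapping.lookup (lin_poly L c) [L z] = c z"
proof -
  have "Poly_Mapping.lookup (lin_poly L c) [L z] = (\<Sum>z'\<in>{z. c z \<noteq> 0}. if z' = z then c z' else 0)"
    unfolding lin_poly_def lookup_sum lookup_single when_def
    using assms(1) by (intro sum.cong) (auto dest: injD)
  also have "\<dots> = c z" using assms(2) by (simp add: sum.delta')
  finally show ?thesis .
qed

lemma lin_poly_eqI:
  assumes "inj L" and "finite {z. c z \<noteq> 0}"
    and "\<And>z. Poly_Mapping.lookup p [L z] = c z"
    and "\<And>w. (\<And>z. w \<noteq> [L z]) \<Longrightarrow> Poly_Mapping.lookup p w = 0"
  shows "lin_poly L c = p"
proof (rule poly_mapping_eqI)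
  fix w
  show "Poly_Mapping.lookup (lin_poly L c) w = Poly_Mapping.lookup p w"
  proof (cases "\<exists>z. w = [L z]")
    case True
    then show ?thesis using assms(3) lookup_lin_poly_letter[OF assms(1,2)] by auto
  next
    case False
    then have "\<And>z. w \<noteq> [L z]" by blast
    then show ?thesis by (simp add: assms(4) lookup_lin_poly_eq_0)
  qed
qed

lemma inj_Pl [simp]: "inj Pl" and inj_Dt [simp]: "inj Dt"
  by (auto intro: injI)

locale tri_algebra_basis = tri_algebra sc vd dv pp
  for sc :: "'k::field \<Rightarrow> 'v::ab_group_add \<Rightarrow> 'v" and vd dv pp +
  fixes e :: "'x::linorder \<Rightarrow> 'v"
    and X0 :: "'x set"
  assumes inj_e: "inj e"
    and independent_basis: "\<not> vs.dependent (range e)"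
    and span_basis: "vs.span (range e) = UNIV"
    and span_X0: "vs.span (e ` X0) = L0"
begin

lemma coord_add: "coord sc e (a + b) z = coord sc e a z + coord sc e b z"
  unfolding coord_def using vs.representation_add[OF independent_basis] span_basis by simp

lemma coord_scale: "coord sc e (sc c a) z = c * coord sc e a z"
  unfolding coord_def using vs.representation_scale[OF independent_basis] span_basis by simp

lemma coord_basis: "coord sc e (e t) z = (if z = t then 1 else 0)"
  unfolding coord_def using vs.representation_basis[OF independent_basis, of "e t"] inj_e
  by (auto dest: injD)

lemma finite_coord_support: "finite {z. coord sc e a z \<noteq> 0}"
proof -
  have "{z. coord sc e a z \<noteq> 0} = e -` {b. vs.representation (range e) a b \<noteq> 0}"
    unfolding coord_def by auto
  then show ?thesis using vs.finite_representation inj_e by (metis finite_vimageI)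
qed

text \<open>\<open>expand Pl v\<close> and \<open>expand Dt v\<close> are the polynomials \<open>\<mu>\<close> and \<open>\<dot>\<mu>\<close> of a vector \<open>\<mu> = v\<close>.\<close>

definition expand :: "('x \<Rightarrow> 'x letter) \<Rightarrow> 'v \<Rightarrow> ('x, 'k) apoly" where
  "expand L v = lin_poly L (coord sc e v)"

lemma keys_expand: "w \<in> Poly_Mapping.keys (expand L v) \<Longrightarrow> length w < 2"
  unfolding expand_def by (auto dest: keys_lin_poly)

context
  fixes L :: "'x \<Rightarrow> 'x letter"
  assumes inj_L: "inj L"
begin

lemma lookup_expand_letter: "Poly_Mapping.lookup (expand L v) [L z] = coord sc e v z"
  unfolding expand_def by (rule lookup_lin_poly_letter[OF inj_L finite_coord_support])

lemma lookup_expand_eq_0: "(\<And>z. w \<noteq> [L z]) \<Longrightarrow> Poly_Mapping.lookup (expand L v) w = 0"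
  unfolding expand_def by (rule lookup_lin_poly_eq_0)

lemma expand_add: "expand L (a + b) = expand L a + expand L b"
  unfolding expand_def[of L "a + b"]
  by (rule lin_poly_eqI[OF inj_L finite_coord_support])
    (simp_all add: lookup_add lookup_expand_letter lookup_expand_eq_0 coord_add)

lemma expand_scale: "expand L (sc c a) = psmult c (expand L a)"
  unfolding expand_def[of L "sc c a"]
  by (rule lin_poly_eqI[OF inj_L finite_coord_support])
    (simp_all add: lookup_expand_letter lookup_expand_eq_0 coord_scale)

lemma expand_basis: "expand L (e t) = Poly_Mapping.single [L t] 1"
  unfolding expand_def
  by (rule lin_poly_eqI[OF inj_L finite_coord_support])
    (auto simp: coord_basis lookup_single when_def dest: injD[OF inj_L])

lemma expand_0 [simp]: "expand L 0 = 0"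
  using expand_scale[of 0 0] by simp

lemma expand_diff: "expand L (a - b) = expand L a - expand L b"
  using expand_add[of "a - b" b] by (simp add: eq_diff_eq)

lemma expand_uminus: "expand L (- a) = - expand L a"
  using expand_diff[of 0 a] by simp

end

lemma trivial_mod_span:
  assumes add: "\<And>a b. F (a + b) = F a + F b"
    and scale: "\<And>c a. F (sc c a) = psmult c (F a)"
    and generators: "\<And>b. b \<in> B \<Longrightarrow> trivial_mod S w (F b)"
    and "u \<in> vs.span B"
  shows "trivial_mod S w (F u)"
  using \<open>u \<in> vs.span B\<close>
proof (induction rule: vs.span_induct_alt)
  case base
  show ?case using scale[of 0 0] trivial_mod_0 by simp
next
  case (step c x y)
  then show ?case by (simp add: add scale trivial_mod_add trivial_mod_psmult generators)
qed

lemma trivial_mod_all: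
  assumes "\<And>a b. F (a + b) = F a + F b"
    and "\<And>c a. F (sc c a) = psmult c (F a)"
    and "\<And>t. trivial_mod S w (F (e t))"
  shows "trivial_mod S w (F u)"
  by (rule trivial_mod_span[OF assms(1,2), of "range e"]) (use assms(3) span_basis in auto)

definition rel_plain :: "'x \<Rightarrow> 'x \<Rightarrow> ('x, 'k) apoly" where
  "rel_plain x y = comm_rel (Pl x) (Pl y) (expand Pl (dv (e x) (e y)))"

definition rel_mixed :: "'x \<Rightarrow> 'x \<Rightarrow> ('x, 'k) apoly" where
  "rel_mixed x y = comm_rel (Dt x) (Pl y) (expand Dt (dv (e x) (e y)))"

definition rel_dotted :: "'x \<Rightarrow> 'x \<Rightarrow> ('x, 'k) apoly" where
  "rel_dotted x y = comm_rel (Dt x) (Dt y) (expand Dt (pp (e x) (e y)))"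

abbreviation S :: "('x, 'k) apoly set" where
  "S \<equiv> tri_GS_set sc dv pp e X0"

lemma S_eq: "S = {Poly_Mapping.single [Pl x] 1 | x. x \<in> X0} \<union>
    {rel_plain x y | x y. x \<notin> X0 \<and> y \<notin> X0 \<and> x > y} \<union>
    {rel_mixed x y | x y. y \<notin> X0} \<union> {rel_dotted x y | x y. x > y}"
  by (simp add: tri_GS_set_def rel_plain_def rel_mixed_def rel_dotted_def comm_rel_def expand_def)

lemma single_X0_in_S: "x \<in> X0 \<Longrightarrow> Poly_Mapping.single [Pl x] 1 \<in> S"
  and rel_plain_in_S: "x \<notin> X0 \<Longrightarrow> y \<notin> X0 \<Longrightarrow> y < x \<Longrightarrow> rel_plain x y \<in> S"
  and rel_mixed_in_S: "y \<notin> X0 \<Longrightarrow> rel_mixed x y \<in> S"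
  and rel_dotted_in_S: "y < x \<Longrightarrow> rel_dotted x y \<in> S"
  unfolding S_eq by blast+

lemma lead_rel_plain: "y < x \<Longrightarrow> lead (rel_plain x y) = [Pl x, Pl y]"
  and lead_rel_mixed: "lead (rel_mixed x y) = [Dt x, Pl y]"
  and lead_rel_dotted: "y < x \<Longrightarrow> lead (rel_dotted x y) = [Dt x, Dt y]"
  unfolding rel_plain_def rel_mixed_def rel_dotted_def
  by (simp_all add: lead_comm_rel keys_expand)

lemma monic_S: "s \<in> S \<Longrightarrow> monic s"
  unfolding S_eq rel_plain_def rel_mixed_def rel_dotted_def
  by (auto intro: monic_comm_rel monic_single_letter keys_expand)

lemma S_lead_cases:
  assumes "s \<in> S"
  shows "(\<exists>x. x \<in> X0 \<and> s = Poly_Mapping.single [Pl x] 1 \<and> lead s = [Pl x]) \<or>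
    (\<exists>x y. x \<notin> X0 \<and> y \<notin> X0 \<and> y < x \<and> s = rel_plain x y \<and> lead s = [Pl x, Pl y]) \<or>
    (\<exists>x y. y \<notin> X0 \<and> s = rel_mixed x y \<and> lead s = [Dt x, Pl y]) \<or>
    (\<exists>x y. y < x \<and> s = rel_dotted x y \<and> lead s = [Dt x, Dt y])"
  using assms unfolding S_eq
  by (auto simp: lead_single_letter lead_rel_plain lead_rel_mixed lead_rel_dotted)

lemma trivial_mod_shorter: "s \<in> S \<Longrightarrow> length (lead s) < length w \<Longrightarrow> trivial_mod S w s"
  using trivial_mod_wmul[of s S "[]" "[]" w] by (simp add: word_less_length)

lemma trivial_mod_X0_word:
  assumes "x \<in> X0" and "length (u @ [Pl x] @ v) < length w"
  shows "trivial_mod S w (Poly_Mapping.single (u @ [Pl x] @ v) 1)"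
  using trivial_mod_wmul[OF single_X0_in_S[OF assms(1)], of u v w] assms(2)
  by (simp add: wmul_single lead_single_letter word_less_length)

lemma trivial_mod_expand_L0:
  assumes "u \<in> L0" and "1 < length w"
  shows "trivial_mod S w (expand Pl u)"
proof (rule trivial_mod_span[where B = "e ` X0"])
  show "expand Pl (a + b) = expand Pl a + expand Pl b" for a b
    by (rule expand_add[OF inj_Pl])
  show "expand Pl (sc c a) = psmult c (expand Pl a)" for c a
    by (rule expand_scale[OF inj_Pl])
  show "trivial_mod S w (expand Pl b)" if "b \<in> e ` X0" for b
    using that trivial_mod_X0_word[of _ "[]" "[]" w] assms(2) by (auto simp: expand_basis[OF inj_Pl])
  show "u \<in> vs.span (e ` X0)"
    using assms(1) span_X0 by simp
qed

lemma e_X0_in_L0: "x \<in> X0 \<Longrightarrow> e x \<in> L0"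
  unfolding span_X0[symmetric] by (rule vs.span_base) blast

text \<open>Modulo \<open>S\<close> and below words of length three, the commutation relations hold for all
  pairs of letters, not only for those with a leading word in \<open>S\<close>.\<close>

lemma trivial_mod_rel_plain:
  assumes "length w = 3"
  shows "trivial_mod S w (rel_plain a b)"
proof (cases "a \<in> X0 \<or> b \<in> X0")
  case True
  then have "dv (e a) (e b) \<in> L0"
    using vd_L0_right[OF e_X0_in_L0] vd_L0_left[OF e_X0_in_L0]
    by (auto simp: dv_vd)
  then have "trivial_mod S w (expand Pl (dv (e a) (e b)))"
    using trivial_mod_expand_L0 assms by simp
  moreover have "trivial_mod S w (Poly_Mapping.single [Pl a, Pl b] 1)"
    "trivial_mod S w (Poly_Mapping.single [Pl b, Pl a] 1)"
    using True trivial_mod_X0_word[of a "[]" "[Pl b]" w] trivial_mod_X0_word[of b "[Pl a]" "[]" w]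
      trivial_mod_X0_word[of a "[Pl b]" "[]" w] trivial_mod_X0_word[of b "[]" "[Pl a]" w] assms
    by auto
  ultimately show ?thesis
    unfolding rel_plain_def comm_rel_def by (intro trivial_mod_diff)
next
  case False
  consider "a = b" | "b < a" | "a < b" by fastforce
  then show ?thesis
  proof cases
    case 1
    have "dv (e a) (e a) \<in> L0"
      using vd_self_in_L0 by (simp add: dv_vd)
    then show ?thesis
      using 1 trivial_mod_expand_L0[of "dv (e a) (e a)" w] assms
      by (simp add: rel_plain_def comm_rel_def trivial_mod_uminus)
  next
    case 2
    then show ?thesis using False assms by (intro trivial_mod_shorter rel_plain_in_S) (auto simp: lead_rel_plain)
  next
    case 3
    have "rel_plain a b = - rel_plain b a - expand Pl (dv (e a) (e b) + dv (e b) (e a))"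
      by (simp add: rel_plain_def comm_rel_def expand_add[OF inj_Pl] algebra_simps)
    moreover have "dv (e a) (e b) + dv (e b) (e a) = - (vd (e b) (e a) + vd (e a) (e b))"
      by (simp add: dv_vd)
    then have "dv (e a) (e b) + dv (e b) (e a) \<in> L0"
      by (simp only: L0_uminus_iff vd_sym_in_L0)
    moreover have "trivial_mod S w (rel_plain b a)"
      using 3 False assms by (intro trivial_mod_shorter rel_plain_in_S) (auto simp: lead_rel_plain)
    ultimately show ?thesis
      using trivial_mod_expand_L0 assms by (simp add: trivial_mod_diff trivial_mod_uminus)
  qed
qed

lemma trivial_mod_rel_mixed:
  assumes "length w = 3"
  shows "trivial_mod S w (rel_mixed a b)"
proof (cases "b \<in> X0")
  case True
  have "trivial_mod S w (Poly_Mapping.single [Dt a, Pl b] 1)"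
    "trivial_mod S w (Poly_Mapping.single [Pl b, Dt a] 1)"
    using True trivial_mod_X0_word[of b "[Dt a]" "[]" w] trivial_mod_X0_word[of b "[]" "[Dt a]" w] assms
    by auto
  moreover have "dv (e a) (e b) = 0"
    using vd_L0_left[OF e_X0_in_L0[OF True]] by (simp add: dv_vd)
  ultimately show ?thesis
    unfolding rel_mixed_def comm_rel_def by (simp add: trivial_mod_diff)
next
  case False
  then show ?thesis using assms by (intro trivial_mod_shorter rel_mixed_in_S) (auto simp: lead_rel_mixed)
qed

lemma trivial_mod_rel_dotted:
  assumes "length w = 3"
  shows "trivial_mod S w (rel_dotted a b)"
proof -
  consider "a = b" | "b < a" | "a < b" by fastforce
  then show ?thesis
  proof cases
    case 1
    then show ?thesis by (simp add: rel_dotted_def comm_rel_def trivial_mod_0)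
  next
    case 2
    then show ?thesis using assms by (intro trivial_mod_shorter rel_dotted_in_S) (auto simp: lead_rel_dotted)
  next
    case 3
    have "rel_dotted a b = - rel_dotted b a"
      using pp_antisym[of "e a" "e b"]
      by (simp add: rel_dotted_def comm_rel_def expand_uminus)
    moreover have "trivial_mod S w (rel_dotted b a)"
      using 3 assms by (intro trivial_mod_shorter rel_dotted_in_S) (auto simp: lead_rel_dotted)
    ultimately show ?thesis by (simp add: trivial_mod_uminus)
  qed
qed

lemma trivial_mod_comm_expand_right:
  assumes f: "bilinear_map sc f" and L: "inj L" and M: "inj M"
    and basis: "\<And>t. trivial_mod S w (comm_rel \<alpha> (L t) (expand M (f a (e t))))"
  shows "trivial_mod S w (wmul [\<alpha>] (expand L v) [] - wmul [] (expand L v) [\<alpha>] - expand M (f a v))"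
proof (rule trivial_mod_all[where
      F = "\<lambda>v. wmul [\<alpha>] (expand L v) [] - wmul [] (expand L v) [\<alpha>] - expand M (f a v)"])
  show "wmul [\<alpha>] (expand L (x + y)) [] - wmul [] (expand L (x + y)) [\<alpha>] - expand M (f a (x + y)) =
      (wmul [\<alpha>] (expand L x) [] - wmul [] (expand L x) [\<alpha>] - expand M (f a x)) +
      (wmul [\<alpha>] (expand L y) [] - wmul [] (expand L y) [\<alpha>] - expand M (f a y))" for x y
    by (simp add: expand_add[OF L] expand_add[OF M] wmul_add
        bilinear_map_simps(2)[OF f vs.vector_space_axioms])
  show "wmul [\<alpha>] (expand L (sc c x)) [] - wmul [] (expand L (sc c x)) [\<alpha>] - expand M (f a (sc c x)) =
      psmult c (wmul [\<alpha>] (expand L x) [] - wmul [] (expand L x) [\<alpha>] - expand M (f a x))" for c x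
    by (simp add: expand_scale[OF L] expand_scale[OF M] wmul_psmult psmult_diff
        bilinear_map_simps(4)[OF f vs.vector_space_axioms])
  show "trivial_mod S w (wmul [\<alpha>] (expand L (e t)) [] - wmul [] (expand L (e t)) [\<alpha>] - expand M (f a (e t)))" for t
    using basis[of t] by (simp add: comm_rel_def expand_basis[OF L] wmul_single)
qed

lemma trivial_mod_comm_expand_left:
  assumes f: "bilinear_map sc f" and L: "inj L" and M: "inj M"
    and basis: "\<And>t. trivial_mod S w (comm_rel (L t) \<beta> (expand M (f (e t) b)))"
  shows "trivial_mod S w (wmul [] (expand L v) [\<beta>] - wmul [\<beta>] (expand L v) [] - expand M (f v b))"
proof (rule trivial_mod_all[where
      F = "\<lambda>v. wmul [] (expand L v) [\<beta>] - wmul [\<beta>] (expand L v) [] - expand M (f v b)"])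
  show "wmul [] (expand L (x + y)) [\<beta>] - wmul [\<beta>] (expand L (x + y)) [] - expand M (f (x + y) b) =
      (wmul [] (expand L x) [\<beta>] - wmul [\<beta>] (expand L x) [] - expand M (f x b)) +
      (wmul [] (expand L y) [\<beta>] - wmul [\<beta>] (expand L y) [] - expand M (f y b))" for x y
    by (simp add: expand_add[OF L] expand_add[OF M] wmul_add
        bilinear_map_simps(1)[OF f vs.vector_space_axioms])
  show "wmul [] (expand L (sc c x)) [\<beta>] - wmul [\<beta>] (expand L (sc c x)) [] - expand M (f (sc c x) b) =
      psmult c (wmul [] (expand L x) [\<beta>] - wmul [\<beta>] (expand L x) [] - expand M (f x b))" for c x
    by (simp add: expand_scale[OF L] expand_scale[OF M] wmul_psmult psmult_diff
        bilinear_map_simps(3)[OF f vs.vector_space_axioms])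
  show "trivial_mod S w (wmul [] (expand L (e t)) [\<beta>] - wmul [\<beta>] (expand L (e t)) [] - expand M (f (e t) b))" for t
    using basis[of t] by (simp add: comm_rel_def expand_basis[OF L] wmul_single)
qed

lemmas trivial_mod_plain_expand_left =
  trivial_mod_comm_expand_left[OF bilinear_dv inj_Pl inj_Pl trivial_mod_rel_plain[unfolded rel_plain_def]]
lemmas trivial_mod_plain_expand_right =
  trivial_mod_comm_expand_right[OF bilinear_dv inj_Pl inj_Pl trivial_mod_rel_plain[unfolded rel_plain_def]]
lemmas trivial_mod_mixed_expand_right =
  trivial_mod_comm_expand_right[OF bilinear_dv inj_Pl inj_Dt trivial_mod_rel_mixed[unfolded rel_mixed_def]]
lemmas trivial_mod_mixed_expand_left =
  trivial_mod_comm_expand_left[OF bilinear_dv inj_Dt inj_Dt trivial_mod_rel_mixed[unfolded rel_mixed_def]]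
lemmas trivial_mod_dotted_expand_right =
  trivial_mod_comm_expand_right[OF bilinear_pp inj_Dt inj_Dt trivial_mod_rel_dotted[unfolded rel_dotted_def]]
lemmas trivial_mod_dotted_expand_left =
  trivial_mod_comm_expand_left[OF bilinear_pp inj_Dt inj_Dt trivial_mod_rel_dotted[unfolded rel_dotted_def]]

lemma intersection_plain:
  assumes "x \<notin> X0" "y \<notin> X0" "z \<notin> X0" "z < y" "y < x"
  shows "trivial_mod S [Pl x, Pl y, Pl z]
    (wmul [] (rel_plain x y) [Pl z] - wmul [Pl x] (rel_plain y z) [])"
proof -
  let ?w = "[Pl x, Pl y, Pl z]" and ?a = "e x" and ?b = "e y" and ?c = "e z"
  have composition: "wmul [] (rel_plain x y) [Pl z] - wmul [Pl x] (rel_plain y z) [] =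
      - wmul [Pl y] (rel_plain x z) [] - wmul [] (rel_plain y z) [Pl x]
      + wmul [] (rel_plain x z) [Pl y] + wmul [Pl z] (rel_plain x y) []
      + (wmul [] (expand Pl (dv ?a ?c)) [Pl y] - wmul [Pl y] (expand Pl (dv ?a ?c)) []
         - expand Pl (dv (dv ?a ?c) ?b))
      + (wmul [Pl x] (expand Pl (dv ?b ?c)) [] - wmul [] (expand Pl (dv ?b ?c)) [Pl x]
         - expand Pl (dv ?a (dv ?b ?c)))
      + (wmul [Pl z] (expand Pl (dv ?a ?b)) [] - wmul [] (expand Pl (dv ?a ?b)) [Pl z]
         - expand Pl (dv ?c (dv ?a ?b)))
      + expand Pl (dv (dv ?a ?c) ?b + dv ?a (dv ?b ?c) + dv ?c (dv ?a ?b))"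
    unfolding rel_plain_def comm_rel_def wmul_diff wmul_single expand_add[OF inj_Pl]
    by (simp add: algebra_simps)
  have lower_words: "trivial_mod S ?w (wmul [Pl y] (rel_plain x z) [])"
    "trivial_mod S ?w (wmul [] (rel_plain y z) [Pl x])"
    "trivial_mod S ?w (wmul [] (rel_plain x z) [Pl y])"
    "trivial_mod S ?w (wmul [Pl z] (rel_plain x y) [])"
    using assms by (auto intro!: trivial_mod_wmul rel_plain_in_S
        simp: lead_rel_plain word_less_def lenlex_conv)
  have linear_parts: "trivial_mod S ?w (wmul [] (expand Pl (dv ?a ?c)) [Pl y]
      - wmul [Pl y] (expand Pl (dv ?a ?c)) [] - expand Pl (dv (dv ?a ?c) ?b))"
    "trivial_mod S ?w (wmul [Pl x] (expand Pl (dv ?b ?c)) []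
      - wmul [] (expand Pl (dv ?b ?c)) [Pl x] - expand Pl (dv ?a (dv ?b ?c)))"
    "trivial_mod S ?w (wmul [Pl z] (expand Pl (dv ?a ?b)) []
      - wmul [] (expand Pl (dv ?a ?b)) [Pl z] - expand Pl (dv ?c (dv ?a ?b)))"
    by (rule trivial_mod_plain_expand_left trivial_mod_plain_expand_right, simp)+
  have jacobi_part:
    "trivial_mod S ?w (expand Pl (dv (dv ?a ?c) ?b + dv ?a (dv ?b ?c) + dv ?c (dv ?a ?b)))"
    by (rule trivial_mod_expand_L0[OF dv_jacobi_in_L0]) simp
  show ?thesis
    unfolding composition
    by (intro trivial_mod_add trivial_mod_diff trivial_mod_uminus lower_words linear_parts
        jacobi_part)
qed

lemma intersection_mixed_plain:
  assumes "y \<notin> X0" "z \<notin> X0" "z < y"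
  shows "trivial_mod S [Dt x, Pl y, Pl z]
    (wmul [] (rel_mixed x y) [Pl z] - wmul [Dt x] (rel_plain y z) [])"
proof -
  let ?w = "[Dt x, Pl y, Pl z]" and ?a = "e x" and ?b = "e y" and ?c = "e z"
  have composition: "wmul [] (rel_mixed x y) [Pl z] - wmul [Dt x] (rel_plain y z) [] =
      wmul [] (rel_mixed x z) [Pl y] + wmul [Pl z] (rel_mixed x y) []
      - wmul [Pl y] (rel_mixed x z) [] - wmul [] (rel_plain y z) [Dt x]
      + (wmul [Dt x] (expand Pl (dv ?b ?c)) [] - wmul [] (expand Pl (dv ?b ?c)) [Dt x]
         - expand Dt (dv ?a (dv ?b ?c)))
      + (wmul [] (expand Dt (dv ?a ?c)) [Pl y] - wmul [Pl y] (expand Dt (dv ?a ?c)) []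
         - expand Dt (dv (dv ?a ?c) ?b))
      - (wmul [] (expand Dt (dv ?a ?b)) [Pl z] - wmul [Pl z] (expand Dt (dv ?a ?b)) []
         - expand Dt (dv (dv ?a ?b) ?c))
      + expand Dt (dv ?a (dv ?b ?c) + dv (dv ?a ?c) ?b - dv (dv ?a ?b) ?c)"
    unfolding rel_plain_def rel_mixed_def comm_rel_def wmul_diff wmul_single
      expand_add[OF inj_Dt] expand_diff[OF inj_Dt]
    by (simp add: algebra_simps)
  have lower_words: "trivial_mod S ?w (wmul [] (rel_mixed x z) [Pl y])"
    "trivial_mod S ?w (wmul [Pl z] (rel_mixed x y) [])"
    "trivial_mod S ?w (wmul [Pl y] (rel_mixed x z) [])"
    "trivial_mod S ?w (wmul [] (rel_plain y z) [Dt x])"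
    using assms by (auto intro!: trivial_mod_wmul rel_plain_in_S rel_mixed_in_S
        simp: lead_rel_plain lead_rel_mixed word_less_def lenlex_conv)
  have linear_parts: "trivial_mod S ?w (wmul [Dt x] (expand Pl (dv ?b ?c)) []
      - wmul [] (expand Pl (dv ?b ?c)) [Dt x] - expand Dt (dv ?a (dv ?b ?c)))"
    "trivial_mod S ?w (wmul [] (expand Dt (dv ?a ?c)) [Pl y]
      - wmul [Pl y] (expand Dt (dv ?a ?c)) [] - expand Dt (dv (dv ?a ?c) ?b))"
    "trivial_mod S ?w (wmul [] (expand Dt (dv ?a ?b)) [Pl z]
      - wmul [Pl z] (expand Dt (dv ?a ?b)) [] - expand Dt (dv (dv ?a ?b) ?c))"
    by (rule trivial_mod_mixed_expand_left trivial_mod_mixed_expand_right, simp)+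
  show ?thesis
    unfolding composition dv_leibniz expand_0[OF inj_Dt]
    by (intro trivial_mod_add trivial_mod_diff trivial_mod_uminus trivial_mod_0 lower_words linear_parts)
qed

lemma intersection_dotted_plain:
  assumes "z \<notin> X0" "y < x"
  shows "trivial_mod S [Dt x, Dt y, Pl z]
    (wmul [] (rel_dotted x y) [Pl z] - wmul [Dt x] (rel_mixed y z) [])"
proof -
  let ?w = "[Dt x, Dt y, Pl z]" and ?a = "e x" and ?b = "e y" and ?c = "e z"
  have composition: "wmul [] (rel_dotted x y) [Pl z] - wmul [Dt x] (rel_mixed y z) [] =
      wmul [] (rel_mixed x z) [Dt y] + wmul [Pl z] (rel_dotted x y) []
      - wmul [Dt y] (rel_mixed x z) [] - wmul [] (rel_mixed y z) [Dt x]
      + (wmul [Dt x] (expand Dt (dv ?b ?c)) [] - wmul [] (expand Dt (dv ?b ?c)) [Dt x]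
         - expand Dt (pp ?a (dv ?b ?c)))
      + (wmul [] (expand Dt (dv ?a ?c)) [Dt y] - wmul [Dt y] (expand Dt (dv ?a ?c)) []
         - expand Dt (pp (dv ?a ?c) ?b))
      - (wmul [] (expand Dt (pp ?a ?b)) [Pl z] - wmul [Pl z] (expand Dt (pp ?a ?b)) []
         - expand Dt (dv (pp ?a ?b) ?c))
      + expand Dt (pp ?a (dv ?b ?c) + pp (dv ?a ?c) ?b - dv (pp ?a ?b) ?c)"
    unfolding rel_mixed_def rel_dotted_def comm_rel_def wmul_diff wmul_single
      expand_add[OF inj_Dt] expand_diff[OF inj_Dt]
    by (simp add: algebra_simps)
  have lower_words: "trivial_mod S ?w (wmul [] (rel_mixed x z) [Dt y])"
    "trivial_mod S ?w (wmul [Pl z] (rel_dotted x y) [])"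
    "trivial_mod S ?w (wmul [Dt y] (rel_mixed x z) [])"
    "trivial_mod S ?w (wmul [] (rel_mixed y z) [Dt x])"
    using assms by (auto intro!: trivial_mod_wmul rel_mixed_in_S rel_dotted_in_S
        simp: lead_rel_mixed lead_rel_dotted word_less_def lenlex_conv)
  have linear_parts: "trivial_mod S ?w (wmul [Dt x] (expand Dt (dv ?b ?c)) []
      - wmul [] (expand Dt (dv ?b ?c)) [Dt x] - expand Dt (pp ?a (dv ?b ?c)))"
    "trivial_mod S ?w (wmul [] (expand Dt (dv ?a ?c)) [Dt y]
      - wmul [Dt y] (expand Dt (dv ?a ?c)) [] - expand Dt (pp (dv ?a ?c) ?b))"
    "trivial_mod S ?w (wmul [] (expand Dt (pp ?a ?b)) [Pl z]
      - wmul [Pl z] (expand Dt (pp ?a ?b)) [] - expand Dt (dv (pp ?a ?b) ?c))"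
    by (rule trivial_mod_dotted_expand_left trivial_mod_dotted_expand_right trivial_mod_mixed_expand_left, simp)+
  show ?thesis
    unfolding composition pp_dv_mixed expand_0[OF inj_Dt]
    by (intro trivial_mod_add trivial_mod_diff trivial_mod_uminus trivial_mod_0 lower_words linear_parts)
qed

lemma intersection_dotted:
  assumes "z < y" "y < x"
  shows "trivial_mod S [Dt x, Dt y, Dt z]
    (wmul [] (rel_dotted x y) [Dt z] - wmul [Dt x] (rel_dotted y z) [])"
proof -
  let ?w = "[Dt x, Dt y, Dt z]" and ?a = "e x" and ?b = "e y" and ?c = "e z"
  have composition: "wmul [] (rel_dotted x y) [Dt z] - wmul [Dt x] (rel_dotted y z) [] =
      - wmul [Dt y] (rel_dotted x z) [] - wmul [] (rel_dotted y z) [Dt x]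
      + wmul [] (rel_dotted x z) [Dt y] + wmul [Dt z] (rel_dotted x y) []
      + (wmul [] (expand Dt (pp ?a ?c)) [Dt y] - wmul [Dt y] (expand Dt (pp ?a ?c)) []
         - expand Dt (pp (pp ?a ?c) ?b))
      + (wmul [Dt x] (expand Dt (pp ?b ?c)) [] - wmul [] (expand Dt (pp ?b ?c)) [Dt x]
         - expand Dt (pp ?a (pp ?b ?c)))
      + (wmul [Dt z] (expand Dt (pp ?a ?b)) [] - wmul [] (expand Dt (pp ?a ?b)) [Dt z]
         - expand Dt (pp ?c (pp ?a ?b)))
      + expand Dt (pp (pp ?a ?c) ?b + pp ?a (pp ?b ?c) + pp ?c (pp ?a ?b))"
    unfolding rel_dotted_def comm_rel_def wmul_diff wmul_single expand_add[OF inj_Dt]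
    by (simp add: algebra_simps)
  have lower_words: "trivial_mod S ?w (wmul [Dt y] (rel_dotted x z) [])"
    "trivial_mod S ?w (wmul [] (rel_dotted y z) [Dt x])"
    "trivial_mod S ?w (wmul [] (rel_dotted x z) [Dt y])"
    "trivial_mod S ?w (wmul [Dt z] (rel_dotted x y) [])"
    using assms by (auto intro!: trivial_mod_wmul rel_dotted_in_S
        simp: lead_rel_dotted word_less_def lenlex_conv)
  have linear_parts: "trivial_mod S ?w (wmul [] (expand Dt (pp ?a ?c)) [Dt y]
      - wmul [Dt y] (expand Dt (pp ?a ?c)) [] - expand Dt (pp (pp ?a ?c) ?b))"
    "trivial_mod S ?w (wmul [Dt x] (expand Dt (pp ?b ?c)) []
      - wmul [] (expand Dt (pp ?b ?c)) [Dt x] - expand Dt (pp ?a (pp ?b ?c)))"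
    "trivial_mod S ?w (wmul [Dt z] (expand Dt (pp ?a ?b)) []
      - wmul [] (expand Dt (pp ?a ?b)) [Dt z] - expand Dt (pp ?c (pp ?a ?b)))"
    by (rule trivial_mod_dotted_expand_left trivial_mod_dotted_expand_right, simp)+
  show ?thesis
    unfolding composition pp_jacobi_rearranged expand_0[OF inj_Dt]
    by (intro trivial_mod_add trivial_mod_diff trivial_mod_uminus trivial_mod_0 lower_words linear_parts)
qed

lemma inclusion_trivial:
  assumes "f \<in> S" "g \<in> S" "lead f = u @ lead g @ u'"
  shows "u = [] \<and> u' = [] \<and> f = g"
  using S_lead_cases[OF assms(1)] S_lead_cases[OF assms(2)] assms(3)
  by (auto simp: append_eq_Cons_conv Cons_eq_append_conv)

lemma intersection_trivial:
  assumes "f \<in> S" "g \<in> S" "lead f = u @ u'" "lead g = u' @ u''"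
    and "u \<noteq> []" "u' \<noteq> []" "u'' \<noteq> []"
  shows "trivial_mod S (u @ u' @ u'') (wmul [] f u'' - wmul u g [])"
  using S_lead_cases[OF assms(1)] S_lead_cases[OF assms(2)] assms(3-)
  by (auto simp: append_eq_Cons_conv Cons_eq_append_conv
      intro: intersection_plain intersection_mixed_plain intersection_dotted_plain
        intersection_dotted)

lemma GS_basis_S: "GS_basis S"
proof (rule GS_basisI)
  fix f g h w
  assume f: "f \<in> S" and g: "g \<in> S" and "(h, w) \<in> compositions f g"
  then consider
      (inclusion) u u' where "h = f - wmul u g u'" "lead f = u @ lead g @ u'"
    | (intersection) u u' u'' where "h = wmul [] f u'' - wmul u g []" "w = u @ u' @ u''"
        "lead f = u @ u'" "lead g = u' @ u''" "u \<noteq> []" "u' \<noteq> []" "u'' \<noteq> []"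
    unfolding compositions_def by blast
  then show "trivial_mod S w h"
  proof cases
    case inclusion
    from inclusion_trivial[OF f g inclusion(2)] have "u = []" "u' = []" "f = g" by auto
    with inclusion(1) show ?thesis by (simp add: trivial_mod_0)
  next
    case intersection
    then show ?thesis using intersection_trivial[OF f g] by simp
  qed
qed (rule monic_S)

end

theorem theorem5p3:
  fixes sc :: "'k::field \<Rightarrow> 'v::ab_group_add \<Rightarrow> 'v"
    and vd dv pp :: "'v \<Rightarrow> 'v \<Rightarrow> 'v"
    and e :: "'x::linorder \<Rightarrow> 'v"
    and X0 :: "'x set"
  assumes char: "(2::'k) \<noteq> 0"
    and L: "lie_tri_algebra sc vd dv pp"
    and inj: "inj e"
    and indep: "\<not> module.dependent sc (range e)"
    and spanning: "module.span sc (range e) = UNIV"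
    and X0_indep: "\<not> module.dependent sc (e ` X0)"
    and X0_span: "module.span sc (e ` X0) =
       module.span sc ({vd a b - dv a b | a b. True} \<union> {vd a b - pp a b | a b. True})"
  shows "GS_basis (tri_GS_set sc dv pp e X0)"
proof -
  have algebra: "tri_algebra sc vd dv pp"
    using L char by (rule tri_algebra.intro)
  have "module.span sc (e ` X0) = tri_algebra.L0 sc vd dv pp"
    using X0_span unfolding tri_algebra.L0_def[OF algebra] .
  with algebra inj indep spanning have "tri_algebra_basis sc vd dv pp e X0"
    by (intro tri_algebra_basis.intro tri_algebra_basis_axioms.intro)
  then show ?thesis by (rule tri_algebra_basis.GS_basis_S)
qed

end
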